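(* Let $\mathcal{G}$ be a GBS graph of groups and $w=a_0^{k_0}y_1a_1^{k_1}\cdots y_na_n^{k_n}$ a $\mathcal{G}$-factorization. Define the relation $\sim_{\mathcal{C}}$ on $\{1,\dots,n\}$ by $i\sim_{\mathcal{C}}j$ iff $y_i=\bar y_j$ and: if $i<j$ then $\rho(w_{i,j-1})=0$ and $k_{i,j-1}\in\beta_{y_i}\mathbb{Z}$; if $j<i$ then $\rho(w_{j,i-1})=0$ and $k_{j,i-1}\in\beta_{y_j}\mathbb{Z}$. If $i\sim_{\mathcal{C}}\ell$, $\ell\sim_{\mathcal{C}}m$ and $m\sim_{\mathcal{C}}j$, then $i\sim_{\mathcal{C}}j$.
   Context: $\mathcal{G}$ consists of a finite connected graph $Y$ (vertices $V(Y)$, edges $E(Y)$, maps $\iota,\tau:E(Y)\to V(Y)$, fixed-point-free involution $y\mapsto\bar y$ with $\iota(\bar y)=\tau(y)$) and integers $\alpha_y,\beta_y\in\mathbb{Z}\setminus\{0\}$ with $\alpha_y=\beta_{\bar y}$. A $\mathcal{G}$-factorization is a word $a_0^{k_0}y_1a_1^{k_1}\cdots y_na_n^{k_n}$ with $y_i\in E(Y)$, $a_i\in V(Y)$, $k_i\in\mathbb{Z}$, $\iota(y_i)=a_{i-1}$, $\tau(y_i)=a_i$ and $a_n=a_0$. For $0\le i\le j\le n$: $w_{i,j}=a_i^{k_i}y_{i+1}a_{i+1}^{k_{i+1}}\cdots y_ja_j^{k_j}$ and $k_{i,j}=\sum_{\nu=i}^{j}k_\nu\prod_{\mu=i+1}^{\nu}\alpha_{y_\mu}/\beta_{y_\mu}\in\mathbb{Q}$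 (so $k_{i,j}\in\beta\mathbb{Z}$ means $k_{i,j}$ is an integer multiple of $\beta$). Fix an orientation $D\subseteq E(Y)$ (containing exactly one of $y,\bar y$ for each edge $y$); $\rho$ maps words over $E(Y)\cup\{a^k\}$ to $\mathbb{Z}^D$ additively, with $\rho(a^k)=0$, $\rho(y)=e_y$ and $\rho(\bar y)=-e_y$ for $y\in D$ ($e_y$ the unit vector at $y$); i.e. $\rho$ counts exponent sums of edges. *)

theory Defs
  imports Main "HOL.Rat"
begin

definition gbs_graph ::
  "'v set \<Rightarrow> 'e set \<Rightarrow> ('e \<Rightarrow> 'v) \<Rightarrow> ('e \<Rightarrow> 'v) \<Rightarrow> ('e \<Rightarrow> 'e)
   \<Rightarrow> ('e \<Rightarrow> int) \<Rightarrow> ('e \<Rightarrow> int) \<Rightarrow> bool" where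
  "gbs_graph V E \<iota> \<tau> bar \<alpha> \<beta> \<longleftrightarrow>
     finite V \<and> finite E \<and> V \<noteq> {} \<and>
     (\<forall>y\<in>E. \<iota> y \<in> V \<and> \<tau> y \<in> V \<and> bar y \<in> E \<and> bar y \<noteq> y \<and> bar (bar y) = y
              \<and> \<iota> (bar y) = \<tau> y
              \<and> \<alpha> y \<noteq> 0 \<and> \<beta> y \<noteq> 0 \<and> \<alpha> y = \<beta> (bar y)) \<and>
     (\<forall>u\<in>V. \<forall>v\<in>V. (u, v) \<in> {(\<iota> y, \<tau> y) | y. y \<in> E}\<^sup>*)"

definition orientation :: "'e set \<Rightarrow> ('e \<Rightarrow> 'e) \<Rightarrow> 'e set \<Rightarrow> bool" where
  "orientation E bar D \<longleftrightarrow> D \<subseteq> E \<and> (\<forall>y\<in>E. (y \<in> D) \<noteq> (bar y \<in> D))"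

text \<open>A G-factorization a_0^{k_0} y_1 a_1^{k_1} ... y_n a_n^{k_n}, given by
  sequences a (indices 0..n), k (indices 0..n), y (indices 1..n).\<close>

definition gbs_factorization ::
  "'v set \<Rightarrow> 'e set \<Rightarrow> ('e \<Rightarrow> 'v) \<Rightarrow> ('e \<Rightarrow> 'v)
   \<Rightarrow> nat \<Rightarrow> (nat \<Rightarrow> 'v) \<Rightarrow> (nat \<Rightarrow> int) \<Rightarrow> (nat \<Rightarrow> 'e) \<Rightarrow> bool" where
  "gbs_factorization V E \<iota> \<tau> n a k y \<longleftrightarrow>
     (\<forall>i\<le>n. a i \<in> V) \<and>
     (\<forall>i\<in>{1..n}. y i \<in> E \<and> \<iota> (y i) = a (i - 1) \<and> \<tau> (y i) = a i) \<and>
     a n = a 0"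

text \<open>rho of a single edge: the unit vector e_y if y in D, and -e_{bar y} otherwise
  (as a function on edges supported on D).\<close>

definition rho_edge :: "'e set \<Rightarrow> ('e \<Rightarrow> 'e) \<Rightarrow> 'e \<Rightarrow> 'e \<Rightarrow> int" where
  "rho_edge D bar y e = (if y \<in> D then (if e = y then 1 else 0)
                         else (if e = bar y then -1 else 0))"

text \<open>rho(w_{i,j}) = sum of rho(y_mu) for mu = i+1..j (the vertex powers contribute 0).\<close>

definition rho_sub :: "'e set \<Rightarrow> ('e \<Rightarrow> 'e) \<Rightarrow> (nat \<Rightarrow> 'e) \<Rightarrow> nat \<Rightarrow> nat \<Rightarrow> 'e \<Rightarrow> int" where
  "rho_sub D bar y i j e = (\<Sum>\<mu>\<in>{i+1..j}. rho_edge D bar (y \<mu>) e)"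

definition rho_sub_zero :: "'e set \<Rightarrow> ('e \<Rightarrow> 'e) \<Rightarrow> (nat \<Rightarrow> 'e) \<Rightarrow> nat \<Rightarrow> nat \<Rightarrow> bool" where
  "rho_sub_zero D bar y i j \<longleftrightarrow> (\<forall>e\<in>D. rho_sub D bar y i j e = 0)"

definition kk :: "('e \<Rightarrow> int) \<Rightarrow> ('e \<Rightarrow> int) \<Rightarrow> (nat \<Rightarrow> int) \<Rightarrow> (nat \<Rightarrow> 'e) \<Rightarrow> nat \<Rightarrow> nat \<Rightarrow> rat" where
  "kk \<alpha> \<beta> k y i j = (\<Sum>\<nu>\<in>{i..j}. of_int (k \<nu>) *
       (\<Prod>\<mu>\<in>{i+1..\<nu>}. of_int (\<alpha> (y \<mu>)) / of_int (\<beta> (y \<mu>))))"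

definition in_multZ :: "rat \<Rightarrow> int \<Rightarrow> bool" where
  "in_multZ q b \<longleftrightarrow> (\<exists>m::int. q = of_int (b * m))"

definition simC ::
  "'e set \<Rightarrow> ('e \<Rightarrow> 'e) \<Rightarrow> ('e \<Rightarrow> int) \<Rightarrow> ('e \<Rightarrow> int)
   \<Rightarrow> nat \<Rightarrow> (nat \<Rightarrow> int) \<Rightarrow> (nat \<Rightarrow> 'e) \<Rightarrow> nat \<Rightarrow> nat \<Rightarrow> bool" where
  "simC D bar \<alpha> \<beta> n k y i j \<longleftrightarrow>
     i \<in> {1..n} \<and> j \<in> {1..n} \<and> y i = bar (y j) \<and>
     (i < j \<longrightarrow> rho_sub_zero D bar y i (j - 1) \<and> in_multZ (kk \<alpha> \<beta> k y i (j - 1)) (\<beta> (y i))) \<and>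
     (j < i \<longrightarrow> rho_sub_zero D bar y j (i - 1) \<and> in_multZ (kk \<alpha> \<beta> k y j (i - 1)) (\<beta> (y j)))"

end

theory Submission
  imports Defs
begin

text \<open>Measure everything from the start of the word: let \<open>R t\<close> be \<open>\<rho>\<close> of the first \<open>t\<close>
  edges, \<open>P t\<close> the product of \<open>\<alpha>/\<beta>\<close> over them, and \<open>K t = \<Sum>\<^sub>\<nu>\<^sub><\<^sub>t k\<^sub>\<nu> P \<nu>\<close>.
  Then \<open>\<rho>(w\<^sub>i\<^sub>,\<^sub>j) = R j - R i\<close> and \<open>P i \<cdot> k\<^sub>i\<^sub>,\<^sub>j = K (j + 1) - K i\<close>; moreover \<open>P t\<close> is
  determined by \<open>R t\<close>, since \<open>\<alpha>/\<beta>\<close> is inverted by the edge involution. So \<open>i \<sim>\<^sub>C j\<close> says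
  that \<open>y\<^sub>i\<close> and \<open>y\<^sub>j\<close> are mutually inverse, \<open>R i = R (j - 1)\<close>, \<open>R (i - 1) = R j\<close>, and the
  offsets \<open>K t / (P t \<cdot> \<beta>(y\<^sub>t))\<close> at \<open>t = i\<close> and \<open>t = j\<close> agree modulo \<open>\<int>\<close>.
  This reformulation is symmetric in \<open>i, j\<close>, and along a chain \<open>i \<sim> l \<sim> m \<sim> j\<close> the edges
  \<open>y\<^sub>i\<close> and \<open>y\<^sub>m\<close> coincide, so each of its conditions composes.\<close>

lemma in_multZ_iff_divide_in_Ints:
  assumes "b \<noteq> 0"
  shows "in_multZ q b \<longleftrightarrow> q / of_int b \<in> \<int>"
proof
  assume "in_multZ q b"
  then obtain m where "q = of_int (b * m)" unfolding in_multZ_def by blast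
  with assms show "q / of_int b \<in> \<int>" by simp
next
  assume "q / of_int b \<in> \<int>"
  then obtain m where "q / of_int b = of_int m" by (elim Ints_cases)
  with assms have "q = of_int (b * m)" by (simp add: divide_eq_eq)
  then show "in_multZ q b" unfolding in_multZ_def by blast
qed

locale oriented_gbs_graph =
  fixes V :: "'v set" and E :: "'e set" and \<iota> \<tau> :: "'e \<Rightarrow> 'v" and bar :: "'e \<Rightarrow> 'e"
    and \<alpha> \<beta> :: "'e \<Rightarrow> int" and D :: "'e set"
  assumes gbs_graph: "gbs_graph V E \<iota> \<tau> bar \<alpha> \<beta>"
    and orientation: "orientation E bar D"
begin

lemma edgeD:
  assumes "e \<in> E"
  shows "bar e \<in> E" "bar e \<noteq> e" "bar (bar e) = e" "\<alpha> e \<noteq> 0" "\<beta> e \<noteq> 0" "\<alpha> e = \<beta> (bar e)"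
  using gbs_graph assms unfolding gbs_graph_def by auto

lemma orientation_subset: "D \<subseteq> E"
  using orientation unfolding orientation_def by auto

lemma finite_orientation: "finite D"
  using orientation_subset gbs_graph unfolding gbs_graph_def by (auto intro: finite_subset)

lemma in_orientation_iff_bar_notin: "e \<in> E \<Longrightarrow> e \<in> D \<longleftrightarrow> bar e \<notin> D"
  using orientation unfolding orientation_def by auto

definition ratio :: "'e \<Rightarrow> rat" where
  "ratio e = of_int (\<alpha> e) / of_int (\<beta> e)"

lemma ratio_nonzero: "e \<in> E \<Longrightarrow> ratio e \<noteq> 0"
  using edgeD by (simp add: ratio_def)

lemma ratio_bar: "e \<in> E \<Longrightarrow> ratio (bar e) = inverse (ratio e)"
  using edgeD[of e] edgeD[of "bar e"] by (simp add: ratio_def)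

lemma rho_edge_bar: "e \<in> E \<Longrightarrow> rho_edge D bar (bar e) x = - rho_edge D bar e x"
  using edgeD[of e] in_orientation_iff_bar_notin[of e] unfolding rho_edge_def by auto

lemma prod_ratio_powi_rho_edge:
  assumes e: "e \<in> E"
  shows "(\<Prod>x\<in>D. ratio x powi rho_edge D bar e x) = ratio e"
proof (cases "e \<in> D")
  case True
  have "(\<Prod>x\<in>D. ratio x powi rho_edge D bar e x) = (\<Prod>x\<in>D. if x = e then ratio e else 1)"
    by (rule prod.cong) (auto simp: rho_edge_def True)
  with True finite_orientation show ?thesis by simp
next
  case False
  then have "bar e \<in> D" using in_orientation_iff_bar_notin[OF e] by blast
  have "(\<Prod>x\<in>D. ratio x powi rho_edge D bar e x)
      = (\<Prod>x\<in>D. if x = bar e then inverse (ratio (bar e)) else 1)"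
    by (rule prod.cong) (auto simp: rho_edge_def False power_int_minus)
  with \<open>bar e \<in> D\<close> finite_orientation ratio_bar[OF e] show ?thesis by simp
qed

end

locale gbs_factorized = oriented_gbs_graph V E \<iota> \<tau> bar \<alpha> \<beta> D
  for V :: "'v set" and E :: "'e set" and \<iota> \<tau> :: "'e \<Rightarrow> 'v" and bar :: "'e \<Rightarrow> 'e"
    and \<alpha> \<beta> :: "'e \<Rightarrow> int" and D :: "'e set" +
  fixes n :: nat and a :: "nat \<Rightarrow> 'v" and k :: "nat \<Rightarrow> int" and y :: "nat \<Rightarrow> 'e"
  assumes factorization: "gbs_factorization V E \<iota> \<tau> n a k y"
begin

lemma letter_in_E: "\<mu> \<in> {1..n} \<Longrightarrow> y \<mu> \<in> E"
  using factorization unfolding gbs_factorization_def by auto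

definition prefix_rho :: "nat \<Rightarrow> 'e \<Rightarrow> int" where
  "prefix_rho t e = (\<Sum>\<mu>=1..t. rho_edge D bar (y \<mu>) e)"

definition prefix_ratio :: "nat \<Rightarrow> rat" where
  "prefix_ratio t = (\<Prod>\<mu>=1..t. ratio (y \<mu>))"

definition prefix_weight :: "nat \<Rightarrow> rat" where
  "prefix_weight t = (\<Sum>\<nu><t. of_int (k \<nu>) * prefix_ratio \<nu>)"

definition offset :: "nat \<Rightarrow> rat" where
  "offset t = prefix_weight t / (prefix_ratio t * of_int (\<beta> (y t)))"

lemma prefix_rho_Suc: "prefix_rho (Suc t) e = prefix_rho t e + rho_edge D bar (y (Suc t)) e"
  unfolding prefix_rho_def by simp

lemma prefix_ratio_Suc: "prefix_ratio (Suc t) = prefix_ratio t * ratio (y (Suc t))"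
  unfolding prefix_ratio_def by simp

lemma rho_sub_eq_prefix_rho: "i \<le> j \<Longrightarrow> rho_sub D bar y i j e = prefix_rho j e - prefix_rho i e"
proof (induction j)
  case (Suc j)
  then show ?case
    by (cases "i = Suc j") (auto simp: rho_sub_def prefix_rho_Suc)
qed (simp add: rho_sub_def prefix_rho_def)

lemma rho_sub_zero_iff_prefix_rho_eq:
  "i \<le> j \<Longrightarrow> rho_sub_zero D bar y i j \<longleftrightarrow> (\<forall>x\<in>D. prefix_rho j x = prefix_rho i x)"
  by (simp add: rho_sub_zero_def rho_sub_eq_prefix_rho)

lemma prefix_ratio_split:
  "i \<le> j \<Longrightarrow> prefix_ratio j = prefix_ratio i * (\<Prod>\<mu>\<in>{i+1..j}. ratio (y \<mu>))"
proof (induction j)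
  case (Suc j)
  then show ?case
    by (cases "i = Suc j") (auto simp: prefix_ratio_Suc)
qed (simp add: prefix_ratio_def)

lemma prefix_ratio_nonzero: "t \<le> n \<Longrightarrow> prefix_ratio t \<noteq> 0"
  by (induction t) (auto simp: prefix_ratio_def ratio_nonzero letter_in_E)

lemma prefix_ratio_eq_prod_powi:
  "t \<le> n \<Longrightarrow> prefix_ratio t = (\<Prod>x\<in>D. ratio x powi prefix_rho t x)"
proof (induction t)
  case (Suc t)
  have "(\<Prod>x\<in>D. ratio x powi prefix_rho (Suc t) x)
      = (\<Prod>x\<in>D. ratio x powi prefix_rho t x * ratio x powi rho_edge D bar (y (Suc t)) x)"
    unfolding prefix_rho_Suc
    by (rule prod.cong) (use orientation_subset ratio_nonzero in \<open>auto simp: power_int_add\<close>)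
  also have "\<dots> = prefix_ratio t * ratio (y (Suc t))"
    using Suc prod_ratio_powi_rho_edge[OF letter_in_E] by (simp add: prod.distrib)
  finally show ?case by (simp add: prefix_ratio_Suc)
qed (simp add: prefix_ratio_def prefix_rho_def)

lemma prefix_ratio_eq_if_prefix_rho_eq:
  "s \<le> n \<Longrightarrow> t \<le> n \<Longrightarrow> \<forall>x\<in>D. prefix_rho s x = prefix_rho t x \<Longrightarrow> prefix_ratio s = prefix_ratio t"
  by (simp add: prefix_ratio_eq_prod_powi cong: prod.cong)

lemma kk_eq_prefix_weight:
  assumes "i \<le> j"
  shows "prefix_ratio i * kk \<alpha> \<beta> k y i j = prefix_weight (Suc j) - prefix_weight i"
proof -
  have "prefix_ratio i * kk \<alpha> \<beta> k y i j = (\<Sum>\<nu>\<in>{i..<Suc j}. of_int (k \<nu>) * prefix_ratio \<nu>)"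
    unfolding kk_def sum_distrib_left atLeastLessThanSuc_atLeastAtMost
    by (rule sum.cong) (auto simp: prefix_ratio_split ratio_def)
  also have "\<dots> = prefix_weight (Suc j) - prefix_weight i"
    using sum.atLeastLessThan_concat[of 0 i "Suc j" "\<lambda>\<nu>. of_int (k \<nu>) * prefix_ratio \<nu>"] assms
    by (simp add: prefix_weight_def lessThan_atLeast0 del: sum.op_ivl_Suc)
  finally show ?thesis .
qed

definition matched :: "nat \<Rightarrow> nat \<Rightarrow> bool" where
  "matched i j \<longleftrightarrow> i \<in> {1..n} \<and> j \<in> {1..n} \<and> y i = bar (y j) \<and>
     (\<forall>x\<in>D. prefix_rho i x = prefix_rho (j - 1) x \<and> prefix_rho (i - 1) x = prefix_rho j x) \<and>
     offset i - offset j \<in> \<int>"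

lemma matched_sym: "matched i j \<Longrightarrow> matched j i"
  unfolding matched_def
  by (metis edgeD(3) letter_in_E minus_diff_eq minus_in_Ints_iff)

lemma matched_trans3: "matched i l \<Longrightarrow> matched l m \<Longrightarrow> matched m j \<Longrightarrow> matched i j"
proof -
  assume il: "matched i l" and lm: "matched l m" and mj: "matched m j"
  then have "y i = y m"
    using edgeD(3)[OF letter_in_E] unfolding matched_def by auto
  moreover have "offset i - offset j = (offset i - offset l) + (offset l - offset m) + (offset m - offset j)"
    by simp
  then have "offset i - offset j \<in> \<int>"
    using il lm mj unfolding matched_def by (metis Ints_add)
  ultimately show ?thesis using il lm mj unfolding matched_def by auto
qed

lemma prefix_rho_inverse_pair_iff:
  assumes "i \<in> {1..n}" "j \<in> {1..n}" "y j = bar (y i)"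
  shows "prefix_rho (j - 1) x = prefix_rho i x
    \<longleftrightarrow> prefix_rho i x = prefix_rho (j - 1) x \<and> prefix_rho (i - 1) x = prefix_rho j x"
proof -
  have "prefix_rho j x = prefix_rho (j - 1) x - rho_edge D bar (y i) x"
    using assms prefix_rho_Suc[of "j - 1" x] rho_edge_bar[OF letter_in_E] by simp
  moreover have "prefix_rho i x = prefix_rho (i - 1) x + rho_edge D bar (y i) x"
    using assms prefix_rho_Suc[of "i - 1" x] by simp
  ultimately show ?thesis by auto
qed

lemma offset_diff_eq_kk:
  assumes "i < j" "j \<le> n" "0 < i" "y j = bar (y i)"
    and "\<forall>x\<in>D. prefix_rho (j - 1) x = prefix_rho i x"
  shows "offset j - offset i = kk \<alpha> \<beta> k y i (j - 1) / of_int (\<beta> (y i))"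
proof -
  have yi: "y i \<in> E" using assms letter_in_E by simp
  have "prefix_ratio j = prefix_ratio (j - 1) * ratio (y j)"
    using assms prefix_ratio_Suc[of "j - 1"] by simp
  also have "prefix_ratio (j - 1) = prefix_ratio i"
    using assms by (intro prefix_ratio_eq_if_prefix_rho_eq) auto
  finally have "prefix_ratio j * of_int (\<beta> (y j)) = prefix_ratio i * of_int (\<beta> (y i))"
    using assms(4) edgeD[OF yi] edgeD[OF edgeD(1)[OF yi]] by (simp add: ratio_def)
  then have "offset j - offset i
      = (prefix_weight j - prefix_weight i) / (prefix_ratio i * of_int (\<beta> (y i)))"
    unfolding offset_def by (simp add: diff_divide_distrib)
  also have "prefix_weight j - prefix_weight i = prefix_ratio i * kk \<alpha> \<beta> k y i (j - 1)"
    using kk_eq_prefix_weight[of i "j - 1"] assms by simp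
  finally show ?thesis
    using prefix_ratio_nonzero[of i] assms by simp
qed

lemma simC_iff_matched_of_less:
  assumes "i < j"
  shows "simC D bar \<alpha> \<beta> n k y i j \<longleftrightarrow> matched i j"
proof (cases "i \<in> {1..n} \<and> j \<in> {1..n} \<and> y j = bar (y i)")
  case True
  then have yi: "y i \<in> E" and yy: "y i = bar (y j)"
    using letter_in_E edgeD(3) by auto
  have simC: "simC D bar \<alpha> \<beta> n k y i j
      \<longleftrightarrow> rho_sub_zero D bar y i (j - 1) \<and> in_multZ (kk \<alpha> \<beta> k y i (j - 1)) (\<beta> (y i))"
    using True yy assms unfolding simC_def by auto
  have matched: "matched i j \<longleftrightarrow> (\<forall>x\<in>D. prefix_rho (j - 1) x = prefix_rho i x) \<and> offset j - offset i \<in> \<int>"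
    using True yy prefix_rho_inverse_pair_iff[of i j] unfolding matched_def
    by (metis minus_diff_eq minus_in_Ints_iff)
  have "in_multZ (kk \<alpha> \<beta> k y i (j - 1)) (\<beta> (y i)) \<longleftrightarrow> offset j - offset i \<in> \<int>"
    if "\<forall>x\<in>D. prefix_rho (j - 1) x = prefix_rho i x"
    using that True assms offset_diff_eq_kk[of i j] in_multZ_iff_divide_in_Ints[OF edgeD(5)[OF yi]]
    by simp
  then show ?thesis
    using simC matched rho_sub_zero_iff_prefix_rho_eq[of i "j - 1"] assms by auto
next
  case False
  then show ?thesis
    using assms letter_in_E edgeD(3) unfolding simC_def matched_def by auto
qed

lemma simC_commute: "simC D bar \<alpha> \<beta> n k y i j \<longleftrightarrow> simC D bar \<alpha> \<beta> n k y j i"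
proof -
  have "y i = bar (y j) \<longleftrightarrow> y j = bar (y i)" if "i \<in> {1..n}" "j \<in> {1..n}"
    using that letter_in_E edgeD(3) by metis
  then show ?thesis unfolding simC_def by blast
qed

lemma simC_iff_matched: "simC D bar \<alpha> \<beta> n k y i j \<longleftrightarrow> matched i j"
proof (cases i j rule: linorder_cases)
  case equal
  have "y i \<noteq> bar (y i)" if "i \<in> {1..n}"
    using that letter_in_E edgeD(2) by metis
  with equal show ?thesis unfolding simC_def matched_def by blast
next
  case greater
  then show ?thesis
    using simC_iff_matched_of_less simC_commute matched_sym by blast
qed (fact simC_iff_matched_of_less)

end

theorem lemma3p4:
  fixes V :: "'v set" and E :: "'e set" and \<iota> \<tau> :: "'e \<Rightarrow> 'v" and bar :: "'e \<Rightarrow> 'e"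
    and \<alpha> \<beta> :: "'e \<Rightarrow> int" and D :: "'e set"
    and n :: nat and a :: "nat \<Rightarrow> 'v" and k :: "nat \<Rightarrow> int" and y :: "nat \<Rightarrow> 'e"
    and i l m j :: nat
  assumes "gbs_graph V E \<iota> \<tau> bar \<alpha> \<beta>"
    and "orientation E bar D"
    and "gbs_factorization V E \<iota> \<tau> n a k y"
    and "simC D bar \<alpha> \<beta> n k y i l"
    and "simC D bar \<alpha> \<beta> n k y l m"
    and "simC D bar \<alpha> \<beta> n k y m j"
  shows "simC D bar \<alpha> \<beta> n k y i j"
proof -
  interpret gbs_factorized V E \<iota> \<tau> bar \<alpha> \<beta> D n a k y
    using assms(1-3) by unfold_locales
  from assms(4-6) show ?thesis
    unfolding simC_iff_matched by (rule matched_trans3)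
qed

end
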